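(* Let $\mathscr{A},\mathscr{B}$ be $\sigma$-structures and $k>0$. Then $\mathscr{A}\leftrightarrow^{\mathbb{E}}_k\mathscr{B}$ (there is a non-empty locally invertible pair from $\mathscr{A}$ to $\mathscr{B}$) if and only if Duplicator has a winning strategy in the back-and-forth $\mathbb{E}_k$ game between $\mathscr{A}$ and $\mathscr{B}$.
   Context: $\mathbb{E}_k A=A^{\le k}$ is the set of non-empty sequences over $A$ of length $\le k$, forest-ordered by prefix $\sqsubseteq$; add the empty sequence $\bot$ as root; $s\prec s'$ means $s'$ extends $s$ by exactly one element. For any function $f:A^{\le k}\to B$, $f^*:A^{\le k}\to B^{\le k}$ is $f^*[a_1,\dots,a_j]=[f[a_1],f[a_1,a_2],\dots,f[a_1,\dots,a_j]]$ (and $f^*(\bot)=\bot$). $\mathsf{W}_{\mathscr{A},\mathscr{B}}$ is the set of pairs $(s,t)$ with $s=[a_1,\dots,a_j]$, $t=[b_1,\dots,b_j]$ of equal length such that $\{(a_i,b_i)\}$ is a partial isomorphism: $a_i=a_l\iff b_i=b_l$, and for every $n$-ary $R\in\sigma$ and indices $i_1,\dots,i_n$, $R^{\mathscr{A}}(a_{i_1},\dots,a_{i_n})\iff R^{\mathscr{B}}(b_{i_1},\dots,b_{i_n})$. $\mathcal{S}(\mathscr{A},\mathscr{B})$ is the set of functions $f:A^{\le k}\to B$ with $(s,f^*(s))\in\mathsf{W}_{\mathscr{A},\mathscr{B}}$ for all $s\in A^{\le k}$ (such $f$ are homomorphisms $\mathbb{E}_k\mathscr{A}\to\mathscr{B}$,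 where $\mathbb{E}_k\mathscr{A}$ has $R(s_1,\dots,s_n)$ iff the $s_i$ are pairwise prefix-comparable and $R^{\mathscr{A}}$ holds of their last elements). A locally invertible pair from $\mathscr{A}$ to $\mathscr{B}$ is a pair $(F,G)$ with $F\subseteq\mathcal{S}(\mathscr{A},\mathscr{B})$, $G\subseteq\mathcal{S}(\mathscr{B},\mathscr{A})$ such that: for all $f\in F$ and $s\in A^{\le k}$ there is $g\in G$ with $g^*f^*(s)=s$; and for all $g\in G$ and $t\in B^{\le k}$ there is $f\in F$ with $f^*g^*(t)=t$. It is non-empty if $F$ (equivalently $G$) is non-empty. The back-and-forth $\mathbb{E}_k$ game: positions are pairs $(s,t)$, initially $(\bot,\bot)$. In each round, either Spoiler chooses $s'\succ s$ and Duplicator responds with $t'\succ t$, giving $(s',t')$, or Spoiler chooses $t''\succ t$ and Duplicator responds with $s''\succ s$, giving $(s'',t'')$; Duplicator wins the round if the new position is in $\mathsf{W}_{\mathscr{A},\mathscr{B}}$. The game continues while moves are available (at most $k$ rounds); a winning strategy for Duplicator wins every round. *)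

theory Defs
  imports Main
begin

text \<open>A sigma-structure: the signature is a type 'r of relation symbols with an
arity function; a structure over universe type 'a interprets each symbol R as a
predicate on lists of length arity R (values on other lengths are irrelevant).\<close>

type_synonym ('r, 'a) struc = "'r \<Rightarrow> 'a list \<Rightarrow> bool"

text \<open>Domain of E_k: non-empty sequences of length at most k (the root is []).\<close>
definition seqs :: "nat \<Rightarrow> 'a list set" where
  "seqs k = {s. s \<noteq> [] \<and> length s \<le> k}"

definition star :: "('a list \<Rightarrow> 'b) \<Rightarrow> 'a list \<Rightarrow> 'b list" where
  "star f s = map (\<lambda>i. f (take (Suc i) s)) [0..<length s]"

definition W :: "('r \<Rightarrow> nat) \<Rightarrow> ('r, 'a) struc \<Rightarrow> ('r, 'b) struc
    \<Rightarrow> ('a list \<times> 'b list) set" where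
  "W ar RA RB = {(s, t). length s = length t
      \<and> (\<forall>i < length s. \<forall>l < length s. (s ! i = s ! l) \<longleftrightarrow> (t ! i = t ! l))
      \<and> (\<forall>R is. length is = ar R \<and> (\<forall>i \<in> set is. i < length s) \<longrightarrow>
            (RA R (map (\<lambda>i. s ! i) is) \<longleftrightarrow> RB R (map (\<lambda>i. t ! i) is)))}"

definition Sfun :: "nat \<Rightarrow> ('r \<Rightarrow> nat) \<Rightarrow> ('r, 'a) struc \<Rightarrow> ('r, 'b) struc
    \<Rightarrow> ('a list \<Rightarrow> 'b) set" where
  "Sfun k ar RA RB = {f. \<forall>s \<in> seqs k. (s, star f s) \<in> W ar RA RB}"

definition locally_invertible_pair :: "nat \<Rightarrow> ('r \<Rightarrow> nat) \<Rightarrow> ('r, 'a) struc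
    \<Rightarrow> ('r, 'b) struc \<Rightarrow> ('a list \<Rightarrow> 'b) set \<Rightarrow> ('b list \<Rightarrow> 'a) set \<Rightarrow> bool" where
  "locally_invertible_pair k ar RA RB F G \<longleftrightarrow>
     F \<subseteq> Sfun k ar RA RB \<and> G \<subseteq> Sfun k ar RB RA
     \<and> (\<forall>f \<in> F. \<forall>s \<in> seqs k. \<exists>g \<in> G. star g (star f s) = s)
     \<and> (\<forall>g \<in> G. \<forall>t \<in> seqs k. \<exists>f \<in> F. star f (star g t) = t)"

definition E_equiv :: "nat \<Rightarrow> ('r \<Rightarrow> nat) \<Rightarrow> ('r, 'a) struc \<Rightarrow> ('r, 'b) struc \<Rightarrow> bool" where
  "E_equiv k ar RA RB \<longleftrightarrow>
     (\<exists>F G. locally_invertible_pair k ar RA RB F G \<and> F \<noteq> {})"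

text \<open>A Duplicator strategy consists of a response
function for Spoiler moves in A (d1) and in B (d2), given the current position.\<close>
inductive_set reach :: "nat \<Rightarrow> ('a list \<times> 'b list \<Rightarrow> 'a \<Rightarrow> 'b)
    \<Rightarrow> ('a list \<times> 'b list \<Rightarrow> 'b \<Rightarrow> 'a) \<Rightarrow> ('a list \<times> 'b list) set"
  for k d1 d2 where
  init: "([], []) \<in> reach k d1 d2"
| left: "(s, t) \<in> reach k d1 d2 \<Longrightarrow> length s < k \<Longrightarrow>
          (s @ [a], t @ [d1 (s, t) a]) \<in> reach k d1 d2"
| right: "(s, t) \<in> reach k d1 d2 \<Longrightarrow> length s < k \<Longrightarrow>
          (s @ [d2 (s, t) b], t @ [b]) \<in> reach k d1 d2"

definition winning_strategy :: "nat \<Rightarrow> ('r \<Rightarrow> nat) \<Rightarrow> ('r, 'a) struc \<Rightarrow> ('r, 'b) struc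
    \<Rightarrow> ('a list \<times> 'b list \<Rightarrow> 'a \<Rightarrow> 'b) \<Rightarrow> ('a list \<times> 'b list \<Rightarrow> 'b \<Rightarrow> 'a) \<Rightarrow> bool" where
  "winning_strategy k ar RA RB d1 d2 \<longleftrightarrow>
     (\<forall>p \<in> reach k d1 d2. p \<noteq> ([], []) \<longrightarrow> p \<in> W ar RA RB)"

definition duplicator_wins :: "nat \<Rightarrow> ('r \<Rightarrow> nat) \<Rightarrow> ('r, 'a) struc \<Rightarrow> ('r, 'b) struc \<Rightarrow> bool" where
  "duplicator_wins k ar RA RB \<longleftrightarrow> (\<exists>d1 d2. winning_strategy k ar RA RB d1 d2)"

end

theory Submission
  imports Defs "HOL-Library.Sublist"
begin

text \<open>If Duplicator knows a locally invertible pair (F, G), she keeps the invariant that the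
current position is the graph of some f* with f in F and of some g* with g in G, and answers a
Spoiler move by the next value of that function; local invertibility restores the invariant
for the other side. Conversely, from a winning strategy let F (resp. G) consist of the
functions whose graph stays inside the positions reachable under the strategy. Every
reachable position lies on such a graph: follow the position itself and, once off it, let
the strategy answer.\<close>

lemma star_Nil [simp]: "star f [] = []"
  by (simp add: star_def)

lemma star_snoc [simp]: "star f (s @ [a]) = star f s @ [f (s @ [a])]"
  by (simp add: star_def)

lemma length_star [simp]: "length (star f s) = length s"
  by (simp add: star_def)

lemma star_eq_Nil_iff [simp]: "star f s = [] \<longleftrightarrow> s = []"
  by (simp add: star_def)

lemma star_last_eq:
  assumes "\<And>t. length (h t) = length t" and "\<And>i t. h (take i t) = take i (h t)"
  shows "star (\<lambda>t. last (h t)) t = h t"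
proof (rule nth_equalityI)
  fix i assume "i < length (star (\<lambda>t. last (h t)) t)"
  then have "i < length (h t)" using assms(1) by simp
  then show "star (\<lambda>t. last (h t)) t ! i = h t ! i"
    by (simp add: star_def assms(1) assms(2) take_Suc_conv_app_nth)
qed (simp add: assms(1))

function follow :: "('a list \<times> 'b list \<Rightarrow> 'b \<Rightarrow> 'a) \<Rightarrow> 'a list \<Rightarrow> 'b list \<Rightarrow> 'b list \<Rightarrow> 'a list"
  where
    "follow d s0 t0 [] = []"
  | "follow d s0 t0 (t @ [b]) =
       (if prefix (t @ [b]) t0 then take (Suc (length t)) s0
        else follow d s0 t0 t @ [d (follow d s0 t0 t, t) b])"
  by (metis rev_exhaust prod_cases4) auto
termination by (relation "measure (\<lambda>(_, _, _, t). length t)") auto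

lemma length_follow:
  "length s0 = length t0 \<Longrightarrow> length (follow d s0 t0 t) = length t"
  by (induction t rule: rev_induct) (auto dest: prefix_length_le)

lemma follow_prefix: "prefix t t0 \<Longrightarrow> follow d s0 t0 t = take (length t) s0"
  by (cases t rule: rev_exhaust) auto

lemma follow_take:
  assumes "length s0 = length t0"
  shows "follow d s0 t0 (take i t) = take i (follow d s0 t0 t)"
proof (induction t arbitrary: i rule: rev_induct)
  case (snoc b t)
  have length_t: "length (follow d s0 t0 t) = length t"
    using assms by (rule length_follow)
  show ?case
  proof (cases "i \<le> length t")
    case True
    have "take i (follow d s0 t0 (t @ [b])) = take i (follow d s0 t0 t)"
    proof (cases "prefix (t @ [b]) t0")
      case True
      then have "follow d s0 t0 t = take (length t) s0"
        by (blast intro: follow_prefix append_prefixD)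
      with True \<open>i \<le> length t\<close> show ?thesis
        by (simp add: min_def)
    qed (use True length_t in simp)
    then show ?thesis
      using True snoc.IH by simp
  next
    case False
    then show ?thesis
      using length_follow[OF assms, of d "t @ [b]"] by simp
  qed
qed simp

lemma star_follow:
  "length s0 = length t0 \<Longrightarrow> star (\<lambda>t. last (follow d s0 t0 t)) t = follow d s0 t0 t"
  by (rule star_last_eq) (simp_all add: length_follow follow_take)

lemma ex_star_through_position:
  assumes prefix_closed: "\<And>s t i. (s, t) \<in> P \<Longrightarrow> (take i s, take i t) \<in> P"
    and respond: "\<And>s t b. (s, t) \<in> P \<Longrightarrow> length t < k \<Longrightarrow> (s @ [d (s, t) b], t @ [b]) \<in> P"
    and "(s0, t0) \<in> P" and "length s0 = length t0"
  shows "\<exists>g. star g t0 = s0 \<and> (\<forall>t. length t \<le> k \<longrightarrow> (star g t, t) \<in> P)"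
proof (intro exI conjI allI impI)
  let ?g = "\<lambda>t. last (follow d s0 t0 t)"
  have star_g: "star ?g t = follow d s0 t0 t" for t
    using \<open>length s0 = length t0\<close> by (rule star_follow)
  show "star ?g t0 = s0"
    using \<open>length s0 = length t0\<close> by (simp add: star_g follow_prefix)
  show "(star ?g t, t) \<in> P" if "length t \<le> k" for t
    using that unfolding star_g
  proof (induction t rule: rev_induct)
    case Nil
    show ?case
      using prefix_closed[OF \<open>(s0, t0) \<in> P\<close>, of 0] by simp
  next
    case (snoc b t)
    show ?case
    proof (cases "prefix (t @ [b]) t0")
      case True
      then have "take (Suc (length t)) t0 = t @ [b]"
        by (metis length_append_singleton prefix_def append_eq_conv_conj)
      then show ?thesis
        using True prefix_closed[OF \<open>(s0, t0) \<in> P\<close>, of "Suc (length t)"] by simp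
    qed (use snoc respond in simp)
  qed
qed

lemma reach_length: "(s, t) \<in> reach k d1 d2 \<Longrightarrow> length s = length t \<and> length s \<le> k"
  by (induction rule: reach.induct) auto

lemma reach_take: "(s, t) \<in> reach k d1 d2 \<Longrightarrow> (take i s, take i t) \<in> reach k d1 d2"
proof (induction arbitrary: i rule: reach.induct)
  case (left s t a)
  show ?case
    using left.IH[of i] reach_length[OF left.hyps(1)] reach.left[OF left.hyps]
    by (cases "i \<le> length s") simp_all
next
  case (right s t b)
  show ?case
    using right.IH[of i] reach_length[OF right.hyps(1)] reach.right[OF right.hyps]
    by (cases "i \<le> length s") simp_all
qed (simp add: reach.init)

lemma ex_star_in_reach_right:
  assumes "(s0, t0) \<in> reach k d1 d2"
  shows "\<exists>g. star g t0 = s0 \<and> (\<forall>t. length t \<le> k \<longrightarrow> (star g t, t) \<in> reach k d1 d2)"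
proof (rule ex_star_through_position[where d = d2])
  show "(s @ [d2 (s, t) b], t @ [b]) \<in> reach k d1 d2"
    if "(s, t) \<in> reach k d1 d2" and "length t < k" for s t b
    using that reach_length[OF that(1)] by (simp add: reach.right)
qed (use assms reach_take reach_length[OF assms] in auto)

lemma ex_star_in_reach_left:
  assumes "(s0, t0) \<in> reach k d1 d2"
  shows "\<exists>f. star f s0 = t0 \<and> (\<forall>s. length s \<le> k \<longrightarrow> (s, star f s) \<in> reach k d1 d2)"
proof -
  have "\<exists>f. star f s0 = t0 \<and> (\<forall>s. length s \<le> k \<longrightarrow> (star f s, s) \<in> (reach k d1 d2)\<inverse>)"
  proof (rule ex_star_through_position[where d = "d1 \<circ> prod.swap"])
    show "(t @ [(d1 \<circ> prod.swap) (t, s) a], s @ [a]) \<in> (reach k d1 d2)\<inverse>"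
      if "(t, s) \<in> (reach k d1 d2)\<inverse>" and "length s < k" for s t a
      using that reach_length[of s t] by (simp add: reach.left)
  qed (use assms reach_take reach_length[OF assms] in auto)
  then show ?thesis
    by simp
qed

lemma locally_invertible_pair_swap:
  "locally_invertible_pair k ar RA RB F G \<Longrightarrow> locally_invertible_pair k ar RB RA G F"
  unfolding locally_invertible_pair_def by blast

definition respond :: "('a list \<Rightarrow> 'b) set \<Rightarrow> 'a list \<times> 'b list \<Rightarrow> 'a \<Rightarrow> 'b" where
  "respond F = (\<lambda>(s, t) a. (SOME f. f \<in> F \<and> star f s = t) (s @ [a]))"

lemma respond_extends:
  assumes LI: "locally_invertible_pair k ar RA RB F G"
    and "f \<in> F" and "star f s = t" and "length s < k"
  shows "\<exists>f\<in>F. star f (s @ [a]) = t @ [respond F (s, t) a]"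
    and "\<exists>g\<in>G. star g (t @ [respond F (s, t) a]) = s @ [a]"
proof -
  let ?f = "SOME f. f \<in> F \<and> star f s = t"
  have f: "?f \<in> F" "star ?f s = t"
    using someI[of "\<lambda>f. f \<in> F \<and> star f s = t"] assms(2,3) by blast+
  then have extend: "star ?f (s @ [a]) = t @ [respond F (s, t) a]"
    by (simp add: respond_def)
  then show "\<exists>f\<in>F. star f (s @ [a]) = t @ [respond F (s, t) a]"
    using f(1) by blast
  have "s @ [a] \<in> seqs k"
    using \<open>length s < k\<close> by (simp add: seqs_def)
  then obtain g where "g \<in> G" "star g (star ?f (s @ [a])) = s @ [a]"
    using LI f(1) unfolding locally_invertible_pair_def by blast
  then show "\<exists>g\<in>G. star g (t @ [respond F (s, t) a]) = s @ [a]"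
    using extend by auto
qed

lemma reach_respond_realized:
  assumes LI: "locally_invertible_pair k ar RA RB F G" and "F \<noteq> {}" and "k > 0"
    and "(s, t) \<in> reach k (respond F) (respond G \<circ> prod.swap)"
  shows "(\<exists>f\<in>F. star f s = t) \<and> (\<exists>g\<in>G. star g t = s)"
  using assms(4)
proof (induction rule: reach.induct)
  case init
  obtain f where "f \<in> F"
    using \<open>F \<noteq> {}\<close> by blast
  moreover have "[undefined] \<in> seqs k"
    using \<open>k > 0\<close> by (simp add: seqs_def)
  \<comment> \<open>G is non-empty only because some sequence of length at most k exists\<close>
  ultimately obtain g where "g \<in> G"
    using LI unfolding locally_invertible_pair_def by blast
  with \<open>f \<in> F\<close> show ?case
    by auto
next
  case (left s t a)
  from left.IH obtain f where f: "f \<in> F" "star f s = t"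
    by blast
  from respond_extends[OF LI f left.hyps(2), of a]
  show ?case
    by blast
next
  case (right s t b)
  from right.IH obtain g where g: "g \<in> G" "star g t = s"
    by blast
  then have "length t < k"
    using right.hyps(2) by auto
  from respond_extends[OF locally_invertible_pair_swap[OF LI] g this, of b]
  show ?case
    by auto
qed

lemma duplicator_wins_if_E_equiv:
  assumes "E_equiv k ar RA RB" and "k > 0"
  shows "duplicator_wins k ar RA RB"
proof -
  obtain F G where LI: "locally_invertible_pair k ar RA RB F G" and "F \<noteq> {}"
    using assms(1) unfolding E_equiv_def by blast
  have "(s, t) \<in> W ar RA RB"
    if pos: "(s, t) \<in> reach k (respond F) (respond G \<circ> prod.swap)"
      and nonroot: "(s, t) \<noteq> ([], [])" for s t
  proof -
    obtain f where "f \<in> F" "star f s = t"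
      using reach_respond_realized[OF LI \<open>F \<noteq> {}\<close> \<open>k > 0\<close> pos] by blast
    moreover have "s \<in> seqs k"
      using nonroot reach_length[OF pos] \<open>star f s = t\<close> by (auto simp: seqs_def)
    ultimately show ?thesis
      using LI unfolding locally_invertible_pair_def Sfun_def by blast
  qed
  then have "winning_strategy k ar RA RB (respond F) (respond G \<circ> prod.swap)"
    unfolding winning_strategy_def by auto
  then show ?thesis
    unfolding duplicator_wins_def by blast
qed

lemma W_swap: "(s, t) \<in> W ar RA RB \<Longrightarrow> (t, s) \<in> W ar RB RA"
  unfolding W_def by auto

lemma E_equiv_if_winning_strategy:
  assumes win: "winning_strategy k ar RA RB d1 d2"
  shows "E_equiv k ar RA RB"
proof -
  let ?P = "reach k d1 d2"
  define F where "F = {f. \<forall>s\<in>seqs k. (s, star f s) \<in> ?P}"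
  define G where "G = {g. \<forall>t\<in>seqs k. (star g t, t) \<in> ?P}"
  have W: "(s, t) \<in> W ar RA RB" if "(s, t) \<in> ?P" and "s \<noteq> []" for s t
    using win that unfolding winning_strategy_def by blast
  have F_through: "\<exists>f\<in>F. star f s = t" if "(s, t) \<in> ?P" for s t
    using ex_star_in_reach_left[OF that] unfolding F_def seqs_def by auto
  have G_through: "\<exists>g\<in>G. star g t = s" if "(s, t) \<in> ?P" for s t
    using ex_star_in_reach_right[OF that] unfolding G_def seqs_def by auto
  have "F \<subseteq> Sfun k ar RA RB"
    by (auto simp: F_def Sfun_def seqs_def intro: W)
  moreover have "G \<subseteq> Sfun k ar RB RA"
    by (auto simp: G_def Sfun_def seqs_def intro: W_swap[OF W])
  moreover have "\<forall>f\<in>F. \<forall>s\<in>seqs k. \<exists>g\<in>G. star g (star f s) = s"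
    using G_through unfolding F_def by blast
  moreover have "\<forall>g\<in>G. \<forall>t\<in>seqs k. \<exists>f\<in>F. star f (star g t) = t"
    using F_through unfolding G_def by blast
  moreover have "F \<noteq> {}"
    using F_through[OF reach.init] by blast
  ultimately show ?thesis
    unfolding E_equiv_def locally_invertible_pair_def by blast
qed

theorem mainTheorem6:
  fixes k :: nat and ar :: "'r \<Rightarrow> nat"
    and RA :: "('r, 'a) struc" and RB :: "('r, 'b) struc"
  assumes "k > 0"
  shows "E_equiv k ar RA RB \<longleftrightarrow> duplicator_wins k ar RA RB"
  using duplicator_wins_if_E_equiv[OF _ assms] E_equiv_if_winning_strategy
  unfolding duplicator_wins_def by blast

end
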